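(* Let $(x_n)_{n<\omega}$ be an almost overcomplete sequence in a real normed space $X$. If $x_n \to x$ weakly, then $x_n \to x$ in norm.
   Context: A sequence in a normed space $X$ is almost overcomplete if the closed linear span of every subsequence of it has finite codimension in $X$. *)

theory Defs
  imports "HOL-Analysis.Analysis"
begin

text \<open>A subset Y of a real vector space has finite codimension if finitely many
vectors together with Y span the whole space (for a linear subspace Y this is
exactly dim(X/Y) < infinity).\<close>
definition finite_codim :: "'a::real_vector set \<Rightarrow> bool" where
  "finite_codim Y \<longleftrightarrow> (\<exists>F. finite F \<and> span (Y \<union> F) = UNIV)"

definition almost_overcomplete :: "(nat \<Rightarrow> 'a::real_normed_vector) \<Rightarrow> bool" where
  "almost_overcomplete x \<longleftrightarrow>
     (\<forall>\<sigma>::nat \<Rightarrow> nat. strict_mono \<sigma> \<longrightarrow> finite_codim (closure (span (range (x \<circ> \<sigma>)))))"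

definition weakly_tendsto :: "(nat \<Rightarrow> 'a::real_normed_vector) \<Rightarrow> 'a \<Rightarrow> bool" where
  "weakly_tendsto x l \<longleftrightarrow>
     (\<forall>f::'a \<Rightarrow> real. bounded_linear f \<longrightarrow> (\<lambda>n. f (x n)) \<longlonglongrightarrow> f l)"

end

theory Submission
  imports Defs
begin

text \<open>
  Suppose \<open>x\<^sub>n\<close> converges weakly but not in norm to \<open>l\<close>. Normalising a subsequence of
  \<open>x\<^sub>n - l\<close> gives a weakly null sequence of unit vectors, from which Mazur's argument
  extracts a basic subsequence \<open>w\<close> with basis constant at most 2. Together with \<open>l\<close>,
  the closed span \<open>V\<close> of the even-indexed \<open>w\<^sub>j\<close> contains a subsequence of
  \<open>x\<close>, so almost overcompleteness makes \<open>V\<close> of finite codimension. A weakly null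
  sequence approaches every closed subspace of finite codimension (add one vector at a time and
  control the distance by a Hahn-Banach functional), yet the odd-indexed \<open>w\<^sub>j\<close> stay
  at distance at least 1/6 from \<open>V\<close>.
\<close>

section \<open>Hahn-Banach extension of dominated functionals\<close>

text \<open>Partial functionals are represented by their graphs, so that Zorn's lemma applies to the
  inclusion order.\<close>

definition linear_graph :: "('a::real_vector \<times> real) set \<Rightarrow> bool" where
  "linear_graph G \<longleftrightarrow>
     (\<forall>x a b. (x, a) \<in> G \<longrightarrow> (x, b) \<in> G \<longrightarrow> a = b) \<and>
     (\<forall>x a y b. (x, a) \<in> G \<longrightarrow> (y, b) \<in> G \<longrightarrow> (x + y, a + b) \<in> G) \<and>
     (\<forall>x a c. (x, a) \<in> G \<longrightarrow> (c *\<^sub>R x, c * a) \<in> G)"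

lemma linear_graphD:
  assumes "linear_graph G"
  shows linear_graph_unique: "(x, a) \<in> G \<Longrightarrow> (x, b) \<in> G \<Longrightarrow> a = b"
    and linear_graph_add: "(x, a) \<in> G \<Longrightarrow> (y, b) \<in> G \<Longrightarrow> (x + y, a + b) \<in> G"
    and linear_graph_scale: "(x, a) \<in> G \<Longrightarrow> (c *\<^sub>R x, c * a) \<in> G"
  using assms unfolding linear_graph_def by blast+

definition dominated_by_norm :: "real \<Rightarrow> ('a::real_normed_vector \<times> real) set \<Rightarrow> bool" where
  "dominated_by_norm C G \<longleftrightarrow> (\<forall>x a. (x, a) \<in> G \<longrightarrow> a \<le> C * norm x)"

definition graph_extend :: "('a::real_vector \<times> real) set \<Rightarrow> 'a \<Rightarrow> real \<Rightarrow> ('a \<times> real) set" where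
  "graph_extend G v \<xi> = {(y + t *\<^sub>R v, a + t * \<xi>) | y a t. (y, a) \<in> G}"

lemma subset_graph_extend: "G \<subseteq> graph_extend G v \<xi>"
  unfolding graph_extend_def by force

lemma linear_graph_zero:
  assumes "linear_graph G" "G \<noteq> {}"
  shows "(0, 0) \<in> G"
proof -
  obtain x a where "(x, a) \<in> G" using assms(2) by auto
  from linear_graph_scale[OF assms(1) this, of 0] show ?thesis by simp
qed

lemma linear_graph_extend:
  assumes G: "linear_graph G" and v: "v \<notin> fst ` G"
  shows "linear_graph (graph_extend G v \<xi>)"
  unfolding linear_graph_def
proof (intro conjI allI impI)
  fix x a b assume "(x, a) \<in> graph_extend G v \<xi>" "(x, b) \<in> graph_extend G v \<xi>"
  then obtain y1 a1 t1 y2 a2 t2 where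
    1: "(y1, a1) \<in> G" "x = y1 + t1 *\<^sub>R v" "a = a1 + t1 * \<xi>" and
    2: "(y2, a2) \<in> G" "x = y2 + t2 *\<^sub>R v" "b = a2 + t2 * \<xi>"
    unfolding graph_extend_def by blast
  have "t1 = t2"
  proof (rule ccontr)
    assume "t1 \<noteq> t2"
    have "(y1 + (-1) *\<^sub>R y2, a1 + (-1) * a2) \<in> G"
      using linear_graph_add[OF G 1(1) linear_graph_scale[OF G 2(1)]] .
    from linear_graph_scale[OF G this, of "1 / (t2 - t1)"]
    have "((1 / (t2 - t1)) *\<^sub>R (y1 - y2), (1 / (t2 - t1)) * (a1 - a2)) \<in> G" by simp
    moreover have "y1 - y2 = (t2 - t1) *\<^sub>R v" using 1(2) 2(2) by (simp add: algebra_simps)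
    ultimately have "(v, (1 / (t2 - t1)) * (a1 - a2)) \<in> G" using \<open>t1 \<noteq> t2\<close> by simp
    with v show False by force
  qed
  then have "y1 = y2" using 1(2) 2(2) by simp
  then show "a = b" using 1(3) 2(1,3) linear_graph_unique[OF G 1(1)] \<open>t1 = t2\<close> by simp
next
  fix x a y b assume "(x, a) \<in> graph_extend G v \<xi>" "(y, b) \<in> graph_extend G v \<xi>"
  then obtain y1 a1 t1 y2 a2 t2 where
    1: "(y1, a1) \<in> G" "x = y1 + t1 *\<^sub>R v" "a = a1 + t1 * \<xi>" and
    2: "(y2, a2) \<in> G" "y = y2 + t2 *\<^sub>R v" "b = a2 + t2 * \<xi>"
    unfolding graph_extend_def by blast
  have "(y1 + y2, a1 + a2) \<in> G" using linear_graph_add[OF G 1(1) 2(1)] .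
  moreover have "x + y = (y1 + y2) + (t1 + t2) *\<^sub>R v" "a + b = (a1 + a2) + (t1 + t2) * \<xi>"
    using 1 2 by (simp_all add: algebra_simps)
  ultimately show "(x + y, a + b) \<in> graph_extend G v \<xi>" unfolding graph_extend_def by blast
next
  fix x a c assume "(x, a) \<in> graph_extend G v \<xi>"
  then obtain y1 a1 t1 where 1: "(y1, a1) \<in> G" "x = y1 + t1 *\<^sub>R v" "a = a1 + t1 * \<xi>"
    unfolding graph_extend_def by blast
  have "(c *\<^sub>R y1, c * a1) \<in> G" using linear_graph_scale[OF G 1(1)] .
  moreover have "c *\<^sub>R x = c *\<^sub>R y1 + (c * t1) *\<^sub>R v" "c * a = c * a1 + (c * t1) * \<xi>"
    using 1 by (simp_all add: algebra_simps)
  ultimately show "(c *\<^sub>R x, c * a) \<in> graph_extend G v \<xi>" unfolding graph_extend_def by blast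
qed

lemma dominated_graph_extend:
  assumes G: "linear_graph G" "dominated_by_norm C G"
    and lower: "\<And>u a. (u, a) \<in> G \<Longrightarrow> a - C * norm (u - v) \<le> \<xi>"
    and upper: "\<And>u a. (u, a) \<in> G \<Longrightarrow> \<xi> \<le> C * norm (u + v) - a"
  shows "dominated_by_norm C (graph_extend G v \<xi>)"
  unfolding dominated_by_norm_def
proof (clarify)
  fix x a assume "(x, a) \<in> graph_extend G v \<xi>"
  then obtain y b t where yb: "(y, b) \<in> G" and x: "x = y + t *\<^sub>R v" and a: "a = b + t * \<xi>"
    unfolding graph_extend_def by blast
  consider "t = 0" | "t > 0" | "t < 0" by linarith
  then show "a \<le> C * norm x"
  proof cases
    case 1
    then show ?thesis using G(2) yb x a unfolding dominated_by_norm_def by auto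
  next
    case 2
    have scaled: "((1 / t) *\<^sub>R y, (1 / t) * b) \<in> G" using linear_graph_scale[OF G(1) yb] .
    have "t * norm ((1 / t) *\<^sub>R y + v) = norm (t *\<^sub>R ((1 / t) *\<^sub>R y + v))" using 2 by simp
    also have "t *\<^sub>R ((1 / t) *\<^sub>R y + v) = x" using 2 x by (simp add: algebra_simps)
    finally have nx: "t * norm ((1 / t) *\<^sub>R y + v) = norm x" .
    have "t * \<xi> \<le> t * (C * norm ((1 / t) *\<^sub>R y + v) - (1 / t) * b)"
      using upper[OF scaled] 2 by (simp add: mult_left_mono)
    also have "\<dots> = C * (t * norm ((1 / t) *\<^sub>R y + v)) - b"
      using 2 by (simp add: algebra_simps)
    finally show ?thesis using a nx by simp
  next
    case 3
    define s where "s = - t"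
    have s: "s > 0" using 3 unfolding s_def by simp
    have "s * norm ((1 / s) *\<^sub>R y - v) = norm (s *\<^sub>R ((1 / s) *\<^sub>R y - v))" using s by simp
    also have "s *\<^sub>R ((1 / s) *\<^sub>R y - v) = x" using s x unfolding s_def by (simp add: algebra_simps)
    finally have nx: "s * norm ((1 / s) *\<^sub>R y - v) = norm x" .
    have "(1 / s) * b - C * norm ((1 / s) *\<^sub>R y - v) \<le> \<xi>"
      using lower[OF linear_graph_scale[OF G(1) yb, of "1 / s"]] .
    then have "s * ((1 / s) * b - C * norm ((1 / s) *\<^sub>R y - v)) \<le> s * \<xi>"
      using s by (intro mult_left_mono) auto
    then have "t * \<xi> \<le> C * (s * norm ((1 / s) *\<^sub>R y - v)) - b"
      using s unfolding s_def by (simp add: algebra_simps)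
    then show ?thesis using a nx by simp
  qed
qed

lemma dominated_extension_value_exists:
  assumes G: "linear_graph G" "dominated_by_norm C G" "G \<noteq> {}" and C: "C \<ge> 0"
  shows "\<exists>\<xi>. (\<forall>u a. (u, a) \<in> G \<longrightarrow> a - C * norm (u - v) \<le> \<xi>) \<and>
    (\<forall>w b. (w, b) \<in> G \<longrightarrow> \<xi> \<le> C * norm (w + v) - b)"
proof -
  have key: "a - C * norm (u - v) \<le> C * norm (w + v) - b" if "(u, a) \<in> G" "(w, b) \<in> G" for u a w b
  proof -
    have "a + b \<le> C * norm (u + w)"
      using G(2) linear_graph_add[OF G(1) that] unfolding dominated_by_norm_def by auto
    also have "\<dots> \<le> C * (norm (u - v) + norm (w + v))"
      using norm_triangle_ineq[of "u - v" "w + v"] C by (intro mult_left_mono) simp_all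
    finally show ?thesis by (simp add: algebra_simps)
  qed
  define L where "L = {a - C * norm (u - v) | u a. (u, a) \<in> G}"
  obtain w b where wb: "(w, b) \<in> G" using G(3) by auto
  have "L \<noteq> {}" using wb unfolding L_def by blast
  have "bdd_above L"
    using key[OF _ wb] unfolding L_def bdd_above_def by blast
  have "a - C * norm (u - v) \<le> Sup L" if "(u, a) \<in> G" for u a
    by (rule cSup_upper[OF _ \<open>bdd_above L\<close>]) (use that L_def in blast)
  moreover have "Sup L \<le> C * norm (w + v) - b" if "(w, b) \<in> G" for w b
    by (rule cSup_least[OF \<open>L \<noteq> {}\<close>]) (use that key L_def in blast)
  ultimately show ?thesis by blast
qed

lemma linear_graph_Union_chain:
  assumes lin: "\<And>G. G \<in> Ch \<Longrightarrow> linear_graph G"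
    and chain: "\<And>G H. G \<in> Ch \<Longrightarrow> H \<in> Ch \<Longrightarrow> G \<subseteq> H \<or> H \<subseteq> G"
  shows "linear_graph (\<Union>Ch)"
proof -
  have common: "\<exists>G\<in>Ch. p \<in> G \<and> q \<in> G" if "p \<in> \<Union>Ch" "q \<in> \<Union>Ch" for p q
    using that chain by blast
  show ?thesis
    unfolding linear_graph_def
  proof (intro conjI allI impI)
    fix x a b assume "(x, a) \<in> \<Union>Ch" "(x, b) \<in> \<Union>Ch"
    with common show "a = b" by (meson lin linear_graph_unique)
  next
    fix x a y b assume "(x, a) \<in> \<Union>Ch" "(y, b) \<in> \<Union>Ch"
    with common show "(x + y, a + b) \<in> \<Union>Ch" by (meson UnionI lin linear_graph_add)
  next
    fix x a c assume "(x, a) \<in> \<Union>Ch"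
    then show "(c *\<^sub>R x, c * a) \<in> \<Union>Ch" by (meson UnionE UnionI lin linear_graph_scale)
  qed
qed

lemma total_linear_graph_bounded_linear:
  assumes lin: "linear_graph G" and dom: "\<And>x. \<exists>a. (x, a) \<in> G" and dominated: "dominated_by_norm C G"
  shows "\<exists>f. bounded_linear f \<and> (\<forall>x a. (x, a) \<in> G \<longrightarrow> f x = a) \<and> (\<forall>x. \<bar>f x\<bar> \<le> C * norm x)"
proof -
  define f where "f x = (THE a. (x, a) \<in> G)" for x
  have fG: "(x, f x) \<in> G" for x
  proof -
    obtain a where a: "(x, a) \<in> G" using dom by blast
    have "f x = a" unfolding f_def using a linear_graph_unique[OF lin a] by blast
    with a show ?thesis by simp
  qed
  have graph: "f x = a" if "(x, a) \<in> G" for x a using linear_graph_unique[OF lin fG that] .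
  have add: "f (x + y) = f x + f y" for x y using graph[OF linear_graph_add[OF lin fG fG]] .
  have scale: "f (c *\<^sub>R x) = c * f x" for c x using graph[OF linear_graph_scale[OF lin fG]] .
  have upper: "f x \<le> C * norm x" for x using dominated fG unfolding dominated_by_norm_def by blast
  have bound: "\<bar>f x\<bar> \<le> C * norm x" for x
    using upper[of x] upper[of "- x"] scale[of "-1" x] by (simp add: abs_le_iff)
  have "bounded_linear f"
    by (rule bounded_linear_intro[where K = C]) (use add scale bound in \<open>auto simp: mult.commute\<close>)
  with graph bound show ?thesis by auto
qed

lemma maximal_dominated_linear_graph_total:
  assumes C: "C \<ge> 0" and M: "linear_graph M" "dominated_by_norm C M" "M \<noteq> {}"
    and maximal: "\<And>G. linear_graph G \<Longrightarrow> dominated_by_norm C G \<Longrightarrow> M \<subseteq> G \<Longrightarrow> G = M"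
  shows "\<exists>a. (v, a) \<in> M"
proof (rule ccontr)
  assume "\<nexists>a. (v, a) \<in> M"
  then have v: "v \<notin> fst ` M" by force
  obtain \<xi> where \<xi>: "\<forall>u a. (u, a) \<in> M \<longrightarrow> a - C * norm (u - v) \<le> \<xi>"
    "\<forall>w b. (w, b) \<in> M \<longrightarrow> \<xi> \<le> C * norm (w + v) - b"
    using dominated_extension_value_exists[OF M C] by blast
  have "dominated_by_norm C (graph_extend M v \<xi>)"
    by (rule dominated_graph_extend[OF M(1,2)]) (use \<xi> in auto)
  then have "graph_extend M v \<xi> = M"
    using maximal linear_graph_extend[OF M(1) v] subset_graph_extend by blast
  moreover have "(0 + 1 *\<^sub>R v, 0 + 1 * \<xi>) \<in> graph_extend M v \<xi>"
    using linear_graph_zero[OF M(1,3)] unfolding graph_extend_def by blast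
  ultimately have "(v, \<xi>) \<in> M" by simp
  with v show False by (metis fst_conv image_eqI)
qed

lemma dominated_linear_graph_extends:
  assumes C: "C \<ge> 0" and G0: "linear_graph G0" "dominated_by_norm C G0" "G0 \<noteq> {}"
  shows "\<exists>f. bounded_linear f \<and> (\<forall>x a. (x, a) \<in> G0 \<longrightarrow> f x = a) \<and> (\<forall>x. \<bar>f x\<bar> \<le> C * norm x)"
proof -
  define A where "A = {G. linear_graph G \<and> dominated_by_norm C G \<and> G0 \<subseteq> G}"
  have "\<exists>U\<in>A. \<forall>X\<in>Ch. X \<subseteq> U" if Ch: "Ch \<in> chains A" for Ch
  proof (cases "Ch = {}")
    case True
    then show ?thesis using G0 unfolding A_def by blast
  next
    case False
    have sub: "Ch \<subseteq> A" using chainsD2[OF Ch] .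
    have "linear_graph (\<Union>Ch)"
      by (rule linear_graph_Union_chain) (use sub chainsD[OF Ch] in \<open>auto simp: A_def\<close>)
    moreover have "dominated_by_norm C (\<Union>Ch)"
      using sub unfolding A_def dominated_by_norm_def by auto
    moreover have "G0 \<subseteq> \<Union>Ch" using sub False unfolding A_def by blast
    ultimately have "\<Union>Ch \<in> A" unfolding A_def by blast
    then show ?thesis by blast
  qed
  then obtain M where M: "M \<in> A" and maximal: "\<And>X. X \<in> A \<Longrightarrow> M \<subseteq> X \<Longrightarrow> X = M"
    using Zorn_Lemma2[of A] by auto
  have lin: "linear_graph M" and dominated: "dominated_by_norm C M" and "G0 \<subseteq> M"
    using M unfolding A_def by blast+
  have "\<exists>a. (v, a) \<in> M" for v
  proof (rule maximal_dominated_linear_graph_total[OF C lin dominated])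
    show "M \<noteq> {}" using \<open>G0 \<subseteq> M\<close> G0(3) by blast
  next
    fix G assume "linear_graph G" "dominated_by_norm C G" "M \<subseteq> G"
    with \<open>G0 \<subseteq> M\<close> show "G = M" using maximal unfolding A_def by blast
  qed
  from total_linear_graph_bounded_linear[OF lin this dominated] obtain f where
    "bounded_linear f" "\<forall>x a. (x, a) \<in> M \<longrightarrow> f x = a" "\<forall>x. \<bar>f x\<bar> \<le> C * norm x"
    by blast
  with \<open>G0 \<subseteq> M\<close> show ?thesis by blast
qed

lemma separating_functional:
  fixes W :: "'a::real_normed_vector set"
  assumes W: "subspace W" and g: "g \<notin> W"
  shows "\<exists>f. bounded_linear f \<and> (\<forall>w\<in>W. f w = 0) \<and> f g = infdist g W \<and> (\<forall>x. \<bar>f x\<bar> \<le> norm x)"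
proof -
  define G where "G = {(w, 0::real) | w. w \<in> W}"
  define G' where "G' = graph_extend G g (infdist g W)"
  have lin: "linear_graph G"
    unfolding linear_graph_def G_def using W by (auto simp: subspace_add subspace_scale)
  have dominated: "dominated_by_norm 1 G" unfolding dominated_by_norm_def G_def by auto
  have "G \<noteq> {}" using subspace_0[OF W] unfolding G_def by blast
  have "g \<notin> fst ` G" using g unfolding G_def by force
  have "dominated_by_norm 1 G'"
    unfolding G'_def
  proof (rule dominated_graph_extend[OF lin dominated])
    fix u a assume "(u, a) \<in> G"
    then have "a = 0" unfolding G_def by blast
    then show "a - 1 * norm (u - g) \<le> infdist g W"
      using infdist_nonneg[of g W] norm_ge_zero[of "u - g"] by linarith
  next
    fix u a assume "(u, a) \<in> G"
    then have "- u \<in> W" "a = 0" unfolding G_def using W subspace_neg by auto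
    from infdist_le[OF this(1), of g] this(2) show "infdist g W \<le> 1 * norm (u + g) - a"
      by (simp add: dist_norm add.commute)
  qed
  moreover have "linear_graph G'" unfolding G'_def using linear_graph_extend[OF lin \<open>g \<notin> fst ` G\<close>] .
  moreover have "G' \<noteq> {}" using subset_graph_extend[of G] \<open>G \<noteq> {}\<close> unfolding G'_def by blast
  ultimately obtain f where
    f: "bounded_linear f" "\<forall>x a. (x, a) \<in> G' \<longrightarrow> f x = a" "\<forall>x. \<bar>f x\<bar> \<le> 1 * norm x"
    using dominated_linear_graph_extends[of 1 G'] by auto
  have "(w + 0 *\<^sub>R g, 0 + 0 * infdist g W) \<in> G'" if "w \<in> W" for w
    using that unfolding G'_def graph_extend_def G_def by blast
  moreover have "(0 + 1 *\<^sub>R g, 0 + 1 * infdist g W) \<in> G'"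
    using subspace_0[OF W] unfolding G'_def graph_extend_def G_def by blast
  ultimately show ?thesis using f by auto
qed

lemma norming_functional:
  fixes e :: "'a::real_normed_vector"
  shows "\<exists>f. bounded_linear f \<and> f e = norm e \<and> (\<forall>x. \<bar>f x\<bar> \<le> norm x)"
proof (cases "e = 0")
  case True
  then show ?thesis by (intro exI[of _ "\<lambda>x. 0"]) simp
next
  case False
  with separating_functional[OF subspace_single_0, of e] show ?thesis by (auto simp: dist_norm)
qed

section \<open>Closed subspaces and distances\<close>

lemma subspace_closure:
  fixes S :: "'a::real_normed_vector set"
  assumes S: "subspace S"
  shows "subspace (closure S)"
proof (rule subspaceI)
  show "0 \<in> closure S" using subspace_0[OF S] closure_subset by blast
next
  fix x y assume "x \<in> closure S" "y \<in> closure S"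
  then obtain a b where a: "\<forall>n. a n \<in> S" "a \<longlonglongrightarrow> x" and b: "\<forall>n. b n \<in> S" "b \<longlonglongrightarrow> y"
    unfolding closure_sequential by blast
  have "\<forall>n. a n + b n \<in> S" using a b S by (simp add: subspace_add)
  moreover have "(\<lambda>n. a n + b n) \<longlonglongrightarrow> x + y" using a b by (intro tendsto_intros)
  ultimately show "x + y \<in> closure S"
    unfolding closure_sequential by (intro exI[of _ "\<lambda>n. a n + b n"]) simp
next
  fix c x assume "x \<in> closure S"
  then obtain a where a: "\<forall>n. a n \<in> S" "a \<longlonglongrightarrow> x" unfolding closure_sequential by blast
  have "\<forall>n. c *\<^sub>R a n \<in> S" using a S by (simp add: subspace_scale)
  moreover have "(\<lambda>n. c *\<^sub>R a n) \<longlonglongrightarrow> c *\<^sub>R x" using a by (intro tendsto_intros)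
  ultimately show "c *\<^sub>R x \<in> closure S"
    unfolding closure_sequential by (intro exI[of _ "\<lambda>n. c *\<^sub>R a n"]) simp
qed

lemma coordinate_functional_span_insert:
  fixes V :: "'a::real_normed_vector set"
  assumes V: "subspace V" "closed V" and g: "g \<notin> V"
  shows "\<exists>h. bounded_linear h \<and> (\<forall>v\<in>span (insert g V). v - h v *\<^sub>R g \<in> V)"
proof -
  obtain f where f: "bounded_linear f" "\<forall>w\<in>V. f w = 0" "f g = infdist g V"
    using separating_functional[OF V(1) g] by blast
  interpret f: bounded_linear f by fact
  have "f g > 0" using f(3) infdist_pos_not_in_closed[OF V(2) _ g] subspace_0[OF V(1)] by auto
  have "v - (f v / f g) *\<^sub>R g \<in> V" if v: "v \<in> span (insert g V)" for v
  proof -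
    obtain k where "v - k *\<^sub>R g \<in> span V" using v span_breakdown_eq by blast
    then have k: "v - k *\<^sub>R g \<in> V" using span_eq_iff[THEN iffD2, OF V(1)] by simp
    have "f v = f (v - k *\<^sub>R g) + k * f g" by (simp add: f.diff f.scale)
    with k f(2) \<open>f g > 0\<close> have "f v / f g = k" by simp
    with k show ?thesis by simp
  qed
  moreover have "bounded_linear (\<lambda>v. f v / f g)"
    using bounded_linear_compose[OF bounded_linear_divide f(1)] .
  ultimately show ?thesis by blast
qed

lemma closed_span_insert:
  fixes V :: "'a::real_normed_vector set"
  assumes V: "subspace V" "closed V"
  shows "closed (span (insert g V))"
proof (cases "g \<in> V")
  case True
  then show ?thesis using V by (simp add: span_redundant span_base span_eq_iff[THEN iffD2, OF V(1)])
next
  case False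
  obtain h where h: "bounded_linear h" "\<forall>v\<in>span (insert g V). v - h v *\<^sub>R g \<in> V"
    using coordinate_functional_span_insert[OF V False] by blast
  interpret h: bounded_linear h by fact
  show ?thesis
    unfolding closed_sequential_limits
  proof (intro allI impI, elim conjE)
    fix a y assume a: "\<forall>n. a n \<in> span (insert g V)" and lim: "a \<longlonglongrightarrow> y"
    have "(\<lambda>n. a n - h (a n) *\<^sub>R g) \<longlonglongrightarrow> y - h y *\<^sub>R g" by (intro tendsto_intros h.tendsto lim)
    from closed_sequentially[OF V(2) _ this] have "y - h y *\<^sub>R g \<in> V" using a h(2) by blast
    then have "y - h y *\<^sub>R g \<in> span V" using span_superset by blast
    then show "y \<in> span (insert g V)" unfolding span_breakdown_eq by blast
  qed
qed

lemma span_insert_span: "span (insert a (span S)) = span (insert a S)"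
  unfolding span_eq by (auto intro: span_base span_superset span_mono[THEN subsetD, of S])

lemma closed_span_finite:
  fixes B :: "'a::real_normed_vector set"
  assumes "finite B"
  shows "closed (span B)"
  using assms
proof (induction B rule: finite_induct)
  case empty
  then show ?case by simp
next
  case (insert b B)
  from closed_span_insert[OF subspace_span insert.IH] show ?case by (simp add: span_insert_span)
qed

lemma infdist_geI:
  assumes "A \<noteq> {}" "\<And>a. a \<in> A \<Longrightarrow> c \<le> dist x a"
  shows "c \<le> infdist x A"
  unfolding infdist_notempty[OF assms(1)] by (rule cINF_greatest[OF assms])

lemma infdist_le_infdist_span_insert:
  fixes V :: "'a::real_normed_vector set"
  assumes h: "bounded_linear h" "\<forall>v\<in>span (insert g V). v - h v *\<^sub>R g \<in> V"
    and M: "M \<ge> 0" "\<And>x. \<bar>h x\<bar> \<le> M * norm x"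
  shows "infdist x V \<le> (1 + M * norm g) * infdist x (span (insert g V)) + norm g * \<bar>h x\<bar>"
proof -
  interpret h: bounded_linear h by fact
  have bound: "infdist x V - norm g * \<bar>h x\<bar> \<le> (1 + M * norm g) * dist x v"
    if v: "v \<in> span (insert g V)" for v
  proof -
    from infdist_le[OF h(2)[rule_format, OF v]]
    have "infdist x V \<le> norm ((x - v) + h v *\<^sub>R g)" by (simp add: dist_norm algebra_simps)
    also have "\<dots> \<le> norm (x - v) + \<bar>h v\<bar> * norm g"
      using norm_triangle_ineq[of "x - v" "h v *\<^sub>R g"] by simp
    also have "\<bar>h v\<bar> \<le> \<bar>h x\<bar> + M * norm (x - v)" using M(2)[of "x - v"] h.diff[of x v] by linarith
    then have "\<bar>h v\<bar> * norm g \<le> (\<bar>h x\<bar> + M * norm (x - v)) * norm g" by (rule mult_right_mono) simp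
    finally show ?thesis by (simp add: dist_norm algebra_simps)
  qed
  have pos: "0 < 1 + M * norm g" using M(1) by (simp add: add_pos_nonneg)
  have "(infdist x V - norm g * \<bar>h x\<bar>) / (1 + M * norm g) \<le> infdist x (span (insert g V))"
  proof (rule infdist_geI)
    show "span (insert g V) \<noteq> {}" using span_zero by blast
  next
    fix v assume "v \<in> span (insert g V)"
    with bound pos show "(infdist x V - norm g * \<bar>h x\<bar>) / (1 + M * norm g) \<le> dist x v"
      by (simp add: divide_le_eq mult.commute)
  qed
  then show ?thesis using pos by (simp add: divide_le_eq algebra_simps)
qed

section \<open>Finite-dimensional subspaces\<close>

lemma finite_span_bounded_convergent_subsequence:
  fixes B :: "'a::real_normed_vector set" and u :: "nat \<Rightarrow> 'a"
  assumes "finite B" "\<forall>n. u n \<in> span B" "bounded (range u)"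
  shows "\<exists>l r. strict_mono r \<and> (u \<circ> r) \<longlonglongrightarrow> l"
  using assms
proof (induction B arbitrary: u rule: finite_induct)
  case empty
  then have "u \<circ> id = (\<lambda>n. 0)" by auto
  then show ?case using strict_mono_id by (metis tendsto_const)
next
  case (insert b B)
  show ?case
  proof (cases "b \<in> span B")
    case True
    then have "\<forall>n. u n \<in> span B" using insert.prems(1) by (simp add: span_redundant)
    then show ?thesis using insert.IH insert.prems(2) by blast
  next
    case False
    obtain h where h: "bounded_linear h" "\<forall>v\<in>span (insert b (span B)). v - h v *\<^sub>R b \<in> span B"
      using coordinate_functional_span_insert[OF subspace_span
          closed_span_finite[OF insert.hyps(1)] False] by blast
    let ?coord = "\<lambda>n. h (u n)"
    define e where "e n = u n - ?coord n *\<^sub>R b" for n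
    have e: "e n \<in> span B" for n
      unfolding e_def using h(2) insert.prems(1) by (simp add: span_insert_span)
    have "bounded (range ?coord)"
      using bounded_linear_image[OF insert.prems(2) h(1)] by (simp add: image_image)
    then obtain t r1 where r1: "strict_mono r1" "(?coord \<circ> r1) \<longlonglongrightarrow> t"
      using bounded_imp_convergent_subsequence by blast
    have "bounded_linear (\<lambda>v. v - h v *\<^sub>R b)" using h(1) by (auto intro!: bounded_linear_intros)
    from bounded_linear_image[OF insert.prems(2) this] have "bounded (range (e \<circ> r1))"
      unfolding e_def by (rule bounded_subset) auto
    then have "\<exists>l r. strict_mono r \<and> (e \<circ> r1 \<circ> r) \<longlonglongrightarrow> l" by (intro insert.IH) (use e in auto)
    then obtain el r2 where r2: "strict_mono r2" "(e \<circ> r1 \<circ> r2) \<longlonglongrightarrow> el" by blast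
    have "(\<lambda>n. e (r1 (r2 n)) + ?coord (r1 (r2 n)) *\<^sub>R b) \<longlonglongrightarrow> el + t *\<^sub>R b"
      using r2(2) LIMSEQ_subseq_LIMSEQ[OF r1(2) r2(1)] unfolding comp_def by (intro tendsto_intros)
    then have "(u \<circ> (r1 \<circ> r2)) \<longlonglongrightarrow> el + t *\<^sub>R b" unfolding e_def comp_def by simp
    with strict_mono_o[OF r1(1) r2(1)] show ?thesis by (intro exI conjI)
  qed
qed

lemma compact_span_finite_inter_sphere:
  fixes B :: "'a::real_normed_vector set"
  assumes "finite B"
  shows "compact (span B \<inter> sphere 0 1)"
  unfolding compact_eq_seq_compact_metric seq_compact_def
proof (intro allI impI)
  fix u :: "nat \<Rightarrow> 'a" assume u: "\<forall>n. u n \<in> span B \<inter> sphere 0 1"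
  then have "bounded (range u)" unfolding bounded_iff by auto
  with u obtain l r where r: "strict_mono r" "(u \<circ> r) \<longlonglongrightarrow> l"
    using finite_span_bounded_convergent_subsequence[OF assms] by blast
  have "closed (span B \<inter> sphere 0 1)" using closed_span_finite[OF assms]
    by (intro closed_Int) (auto simp flip: cball_diff_eq_sphere)
  from closed_sequentially[OF this _ r(2)] u have "l \<in> span B \<inter> sphere 0 1" by simp
  with r show "\<exists>l\<in>span B \<inter> sphere 0 1. \<exists>r. strict_mono r \<and> (u \<circ> r) \<longlonglongrightarrow> l" by blast
qed

lemma finite_norming_set_span_finite:
  fixes B :: "'a::real_normed_vector set"
  assumes "finite B" "\<eta> > 0"
  shows "\<exists>\<Phi>. finite \<Phi> \<and> (\<forall>\<phi>\<in>\<Phi>. bounded_linear \<phi> \<and> (\<forall>x. \<bar>\<phi> x\<bar> \<le> norm x)) \<and>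
    (\<forall>e\<in>span B. \<exists>\<phi>\<in>\<Phi>. (1 - \<eta>) * norm e \<le> \<phi> e)"
proof -
  obtain \<phi> :: "'a \<Rightarrow> 'a \<Rightarrow> real"
    where \<phi>: "\<And>c. bounded_linear (\<phi> c) \<and> \<phi> c c = norm c \<and> (\<forall>x. \<bar>\<phi> c x\<bar> \<le> norm x)"
    using norming_functional by metis
  define K where "K = span B \<inter> sphere 0 1"
  have "K \<subseteq> (\<Union>c\<in>K. ball c \<eta>)" using assms(2) by force
  then obtain C where C: "C \<subseteq> K" "finite C" "K \<subseteq> (\<Union>c\<in>C. ball c \<eta>)"
    using compactE_image[of K K "\<lambda>c. ball c \<eta>"] compact_span_finite_inter_sphere[OF assms(1)]
    unfolding K_def by blast
  define \<Phi> where "\<Phi> = insert (\<lambda>x. 0) (\<phi> ` C)"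
  have "\<exists>\<phi>\<in>\<Phi>. (1 - \<eta>) * norm e \<le> \<phi> e" if e: "e \<in> span B" for e
  proof (cases "e = 0")
    case True
    then show ?thesis unfolding \<Phi>_def by simp
  next
    case False
    define e' where "e' = (1 / norm e) *\<^sub>R e"
    have "e' \<in> K" unfolding K_def e'_def using e False by (simp add: span_scale)
    with C(3) obtain c where c: "c \<in> C" "e' \<in> ball c \<eta>" by blast
    interpret c: bounded_linear "\<phi> c" using \<phi>[of c] by (rule conjunct1)
    have "norm c = 1" using c(1) C(1) unfolding K_def by auto
    have "\<phi> c e' = \<phi> c c - \<phi> c (c - e')" by (simp add: c.diff)
    moreover have "\<bar>\<phi> c (c - e')\<bar> \<le> dist c e'" using \<phi>[of c] by (simp add: dist_norm)
    ultimately have "1 - \<eta> \<le> \<phi> c e'" using \<phi>[of c] \<open>norm c = 1\<close> c(2) unfolding mem_ball by linarith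
    then have "(1 - \<eta>) * norm e \<le> norm e * \<phi> c e'" by (simp add: mult.commute mult_left_mono)
    also have "\<dots> = \<phi> c e" unfolding e'_def using False by (simp add: c.scale)
    finally show ?thesis unfolding \<Phi>_def using c(1) by blast
  qed
  moreover have "finite \<Phi>" unfolding \<Phi>_def using C(2) by simp
  moreover have "\<forall>\<phi>\<in>\<Phi>. bounded_linear \<phi> \<and> (\<forall>x. \<bar>\<phi> x\<bar> \<le> norm x)"
    unfolding \<Phi>_def using \<phi> by (auto intro: bounded_linear_zero)
  ultimately show ?thesis by blast
qed

section \<open>Weakly null sequences\<close>

lemma weakly_tendsto_subseq:
  fixes x :: "nat \<Rightarrow> 'a::real_normed_vector"
  assumes "weakly_tendsto x l" "strict_mono r"
  shows "weakly_tendsto (x \<circ> r) l"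
  unfolding weakly_tendsto_def
proof (intro allI impI)
  fix f :: "'a \<Rightarrow> real" assume "bounded_linear f"
  with assms(1) have "(\<lambda>n. f (x n)) \<longlonglongrightarrow> f l" unfolding weakly_tendsto_def by blast
  from LIMSEQ_subseq_LIMSEQ[OF this assms(2)] show "(\<lambda>n. f ((x \<circ> r) n)) \<longlonglongrightarrow> f l"
    by (simp add: comp_def)
qed

lemma weakly_tendsto_zeroD:
  fixes z :: "nat \<Rightarrow> 'a::real_normed_vector" and f :: "'a \<Rightarrow> real"
  assumes "weakly_tendsto z 0" "bounded_linear f"
  shows "(\<lambda>n. f (z n)) \<longlonglongrightarrow> 0"
proof -
  interpret f: bounded_linear f by fact
  from assms have "(\<lambda>n. f (z n)) \<longlonglongrightarrow> f 0" unfolding weakly_tendsto_def by blast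
  then show ?thesis by (simp add: f.zero)
qed

lemma not_tendsto_weakly_normalized_subsequence:
  fixes x :: "nat \<Rightarrow> 'a::real_normed_vector"
  assumes weak: "weakly_tendsto x l" and not_lim: "\<not> x \<longlonglongrightarrow> l"
  shows "\<exists>\<rho> z c. strict_mono \<rho> \<and> (\<forall>n. norm (z n) = 1) \<and> weakly_tendsto z 0 \<and>
    (\<forall>n. x (\<rho> n) = l + c n *\<^sub>R z n)"
proof -
  obtain r where r: "r > 0" "\<forall>N. \<exists>n\<ge>N. r \<le> norm (x n - l)"
    using not_lim unfolding LIMSEQ_iff by (auto simp: not_less)
  then have "infinite {n. r \<le> norm (x n - l)}" unfolding infinite_nat_iff_unbounded_le by blast
  then obtain \<rho> :: "nat \<Rightarrow> nat" where \<rho>: "strict_mono \<rho>" "\<And>n. r \<le> norm (x (\<rho> n) - l)"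
    using infinite_enumerate by blast
  define c where "c n = norm (x (\<rho> n) - l)" for n
  define z where "z n = (1 / c n) *\<^sub>R (x (\<rho> n) - l)" for n
  have c: "r \<le> c n" "0 < c n" for n using \<rho>(2)[of n] r(1) unfolding c_def by auto
  have "norm (z n) = 1" for n using c(2)[of n] unfolding z_def c_def by simp
  moreover have "x (\<rho> n) = l + c n *\<^sub>R z n" for n using c(2)[of n] unfolding z_def by simp
  moreover have "weakly_tendsto z 0"
    unfolding weakly_tendsto_def
  proof (intro allI impI)
    fix f :: "'a \<Rightarrow> real" assume "bounded_linear f"
    interpret f: bounded_linear f by fact
    have "(\<lambda>n. f (x n)) \<longlonglongrightarrow> f l" using weak \<open>bounded_linear f\<close> unfolding weakly_tendsto_def by blast
    from LIMSEQ_subseq_LIMSEQ[OF this \<rho>(1)] have "(\<lambda>n. f (x (\<rho> n)) - f l) \<longlonglongrightarrow> 0"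
      by (simp add: comp_def LIM_zero)
    then have lim: "(\<lambda>n. \<bar>f (x (\<rho> n)) - f l\<bar> / r) \<longlonglongrightarrow> 0"
      using tendsto_divide_zero[OF tendsto_rabs_zero] by blast
    have "norm (f (z n)) \<le> \<bar>f (x (\<rho> n)) - f l\<bar> / r" for n
    proof -
      have "norm (f (z n)) = \<bar>f (x (\<rho> n)) - f l\<bar> / c n"
        using c(2)[of n] unfolding z_def by (simp add: f.scale f.diff)
      also have "\<dots> \<le> \<bar>f (x (\<rho> n)) - f l\<bar> / r" using c[of n] r(1) by (intro divide_left_mono) auto
      finally show ?thesis .
    qed
    then have "(\<lambda>n. f (z n)) \<longlonglongrightarrow> 0" by (intro Lim_null_comparison[OF always_eventually lim]) simp
    then show "(\<lambda>n. f (z n)) \<longlonglongrightarrow> f 0" by (simp add: f.zero)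
  qed
  ultimately show ?thesis using \<rho>(1) by blast
qed

lemma norming_functional_almost_orthogonal:
  assumes \<phi>: "bounded_linear \<phi>" "\<And>x. \<bar>\<phi> x\<bar> \<le> norm x" "(1 - \<eta> / 2) * norm e \<le> \<phi> e"
    and z: "norm z = 1" "\<bar>\<phi> z\<bar> \<le> \<eta> / 4" and \<eta>: "\<eta> > 0"
  shows "(1 - \<eta>) * norm e \<le> norm (e + t *\<^sub>R z)"
proof (cases "2 * norm e \<le> \<bar>t\<bar>")
  case True
  have "0 \<le> \<eta> * norm e" using \<eta> by simp
  moreover have "(1 - \<eta>) * norm e = norm e - \<eta> * norm e" by (simp add: algebra_simps)
  ultimately have "(1 - \<eta>) * norm e \<le> \<bar>t\<bar> - norm e" using True by linarith
  also have "\<dots> \<le> norm (e + t *\<^sub>R z)" using norm_diff_ineq[of "t *\<^sub>R z" e] z(1) by (simp add: add.commute)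
  finally show ?thesis .
next
  case False
  interpret \<phi>: bounded_linear \<phi> by fact
  have "\<bar>t * \<phi> z\<bar> \<le> (2 * norm e) * (\<eta> / 4)"
    unfolding abs_mult using False z(2) by (intro mult_mono) auto
  then have "- ((2 * norm e) * (\<eta> / 4)) \<le> t * \<phi> z" by linarith
  moreover have "\<phi> (e + t *\<^sub>R z) \<le> norm (e + t *\<^sub>R z)" using \<phi>(2) abs_le_D1 by blast
  moreover have "\<phi> (e + t *\<^sub>R z) = \<phi> e + t * \<phi> z" by (simp add: \<phi>.add \<phi>.scale)
  moreover have "(1 - \<eta>) * norm e = (1 - \<eta> / 2) * norm e - (2 * norm e) * (\<eta> / 4)"
    by (simp add: algebra_simps)
  ultimately show ?thesis using \<phi>(3) by linarith
qed

lemma weakly_null_eventually_almost_orthogonal: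
  fixes z :: "nat \<Rightarrow> 'a::real_normed_vector"
  assumes B: "finite B" and \<eta>: "\<eta> > 0" and z: "\<And>n. norm (z n) = 1" and weak: "weakly_tendsto z 0"
  shows "\<exists>N. \<forall>n\<ge>N. \<forall>e\<in>span B. \<forall>t. (1 - \<eta>) * norm e \<le> norm (e + t *\<^sub>R z n)"
proof -
  obtain \<Phi> where \<Phi>: "finite \<Phi>" "\<forall>\<phi>\<in>\<Phi>. bounded_linear \<phi> \<and> (\<forall>x. \<bar>\<phi> x\<bar> \<le> norm x)"
    "\<forall>e\<in>span B. \<exists>\<phi>\<in>\<Phi>. (1 - \<eta> / 2) * norm e \<le> \<phi> e"
    using finite_norming_set_span_finite[OF B, of "\<eta> / 2"] \<eta> by auto
  have "\<forall>\<phi>\<in>\<Phi>. eventually (\<lambda>n. \<bar>\<phi> (z n)\<bar> < \<eta> / 4) sequentially"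
  proof
    fix \<phi> assume "\<phi> \<in> \<Phi>"
    with \<Phi>(2) weakly_tendsto_zeroD[OF weak] have "(\<lambda>n. \<phi> (z n)) \<longlonglongrightarrow> 0" by blast
    moreover have "0 < \<eta> / 4" using \<eta> by simp
    ultimately show "eventually (\<lambda>n. \<bar>\<phi> (z n)\<bar> < \<eta> / 4) sequentially"
      by (rule order_tendstoD(2)[OF tendsto_rabs_zero])
  qed
  then have "eventually (\<lambda>n. \<forall>\<phi>\<in>\<Phi>. \<bar>\<phi> (z n)\<bar> < \<eta> / 4) sequentially"
    by (rule eventually_ball_finite[OF \<Phi>(1)])
  then obtain N where N: "\<And>n \<phi>. n \<ge> N \<Longrightarrow> \<phi> \<in> \<Phi> \<Longrightarrow> \<bar>\<phi> (z n)\<bar> < \<eta> / 4"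
    unfolding eventually_sequentially by blast
  have "(1 - \<eta>) * norm e \<le> norm (e + t *\<^sub>R z n)" if n: "n \<ge> N" and e: "e \<in> span B" for n e t
  proof -
    obtain \<phi> where \<phi>: "\<phi> \<in> \<Phi>" "(1 - \<eta> / 2) * norm e \<le> \<phi> e" using \<Phi>(3) e by blast
    have "bounded_linear \<phi> \<and> (\<forall>x. \<bar>\<phi> x\<bar> \<le> norm x)" using \<Phi>(2) \<phi>(1) ..
    with \<phi>(2) z N[OF n \<phi>(1)] \<eta> show ?thesis
      by (intro norming_functional_almost_orthogonal) auto
  qed
  then show ?thesis by blast
qed

lemma finite_codim_subset_span_Un:
  assumes "finite_codim Y" "Y \<subseteq> span (V \<union> G)" "finite G"
  shows "finite_codim V"
proof -
  obtain F where F: "finite F" "span (Y \<union> F) = UNIV"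
    using assms(1) unfolding finite_codim_def by blast
  have "Y \<union> F \<subseteq> span (V \<union> (G \<union> F))"
    using assms(2) span_mono[of "V \<union> G" "V \<union> (G \<union> F)"] span_superset[of "V \<union> (G \<union> F)"] by blast
  then have "span (V \<union> (G \<union> F)) = UNIV" using F(2) span_minimal[OF _ subspace_span] by blast
  then show ?thesis unfolding finite_codim_def using F(1) assms(3) by blast
qed

lemma almost_overcomplete_finite_codim:
  fixes x :: "nat \<Rightarrow> 'a::real_normed_vector" and \<sigma> :: "nat \<Rightarrow> nat"
  assumes x: "almost_overcomplete x" and \<sigma>: "strict_mono \<sigma>" and V: "subspace V" "closed V"
    and sub: "\<And>k. x (\<sigma> k) - l \<in> V"
  shows "finite_codim V"
proof -
  have "finite_codim (closure (span (range (x \<circ> \<sigma>))))"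
    using x \<sigma> unfolding almost_overcomplete_def by blast
  moreover have "x (\<sigma> k) \<in> span (insert l V)" for k
  proof -
    have "l + (x (\<sigma> k) - l) \<in> span (insert l V)"
      using sub[of k] by (intro span_add span_base) simp_all
    then show ?thesis by simp
  qed
  then have "range (x \<circ> \<sigma>) \<subseteq> span (insert l V)" by auto
  then have "closure (span (range (x \<circ> \<sigma>))) \<subseteq> span (insert l V)"
    by (intro closure_minimal span_minimal closed_span_insert V subspace_span)
  ultimately show ?thesis by (intro finite_codim_subset_span_Un[of _ V "{l}"]) simp_all
qed

lemma weakly_null_infdist_span_insert:
  fixes V :: "'a::real_normed_vector set"
  assumes V: "subspace V" "closed V" and g: "g \<notin> V" and weak: "weakly_tendsto u 0"
    and lim: "(\<lambda>i. infdist (u i) (span (insert g V))) \<longlonglongrightarrow> 0"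
  shows "(\<lambda>i. infdist (u i) V) \<longlonglongrightarrow> 0"
proof -
  obtain h where h: "bounded_linear h" "\<forall>v\<in>span (insert g V). v - h v *\<^sub>R g \<in> V"
    using coordinate_functional_span_insert[OF V g] by blast
  obtain M where "M > 0" "\<And>x. norm (h x) \<le> norm x * M"
    using bounded_linear.pos_bounded[OF h(1)] by blast
  then have M: "M \<ge> 0" "\<And>x. \<bar>h x\<bar> \<le> M * norm x" by (simp_all add: mult.commute)
  let ?bound = "\<lambda>i. (1 + M * norm g) * infdist (u i) (span (insert g V)) + norm g * \<bar>h (u i)\<bar>"
  from lim weakly_tendsto_zeroD[OF weak h(1)] have "?bound \<longlonglongrightarrow> (1 + M * norm g) * 0 + norm g * 0"
    by (intro tendsto_add tendsto_mult_left tendsto_rabs_zero)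
  then have lim: "?bound \<longlonglongrightarrow> 0" by simp
  show ?thesis
  proof (rule Lim_null_comparison[OF always_eventually lim], intro allI)
    fix i
    show "norm (infdist (u i) V) \<le> ?bound i"
      using infdist_le_infdist_span_insert[OF h M, of "u i"] infdist_nonneg[of "u i" V] by simp
  qed
qed

lemma weakly_null_infdist_finite_codim:
  fixes V :: "'a::real_normed_vector set"
  assumes "subspace V" "closed V" "finite_codim V" and weak: "weakly_tendsto u 0"
  shows "(\<lambda>i. infdist (u i) V) \<longlonglongrightarrow> 0"
proof -
  obtain F where "finite F" "span (V \<union> F) = UNIV" using assms(3) unfolding finite_codim_def by blast
  then show ?thesis using assms(1,2)
  proof (induction F arbitrary: V rule: finite_induct)
    case empty
    then have "V = UNIV" using span_eq_iff[THEN iffD2, of V] by simp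
    then show ?case by simp
  next
    case (insert g F)
    show ?case
    proof (cases "g \<in> V")
      case True
      then have "V \<union> insert g F \<subseteq> span (V \<union> F)" using span_superset by blast
      then have "span (V \<union> F) = UNIV"
        using insert.prems(1) span_minimal[OF _ subspace_span] by blast
      then show ?thesis using insert.IH insert.prems(2,3) by blast
    next
      case False
      let ?V' = "span (insert g V)"
      have "V \<union> insert g F \<subseteq> span (?V' \<union> F)"
        using span_superset[of "insert g V"] span_superset[of "?V' \<union> F"] by blast
      then have "span (?V' \<union> F) = UNIV"
        using insert.prems(1) span_minimal[OF _ subspace_span] by blast
      from insert.IH[OF this subspace_span closed_span_insert[OF insert.prems(2,3)]]
      have "(\<lambda>i. infdist (u i) ?V') \<longlonglongrightarrow> 0" .
      then show ?thesis by (rule weakly_null_infdist_span_insert[OF insert.prems(2,3) False weak])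
    qed
  qed
qed

section \<open>Nearly monotone basic sequences\<close>

text \<open>The factors \<open>1 - (1/2)^(k+2)\<close> have product at least 1/2, so the projections onto initial
  segments have norm at most 2.\<close>

definition nearly_monotone_basic :: "(nat \<Rightarrow> 'a::real_normed_vector) \<Rightarrow> bool" where
  "nearly_monotone_basic w \<longleftrightarrow>
     (\<forall>k. \<forall>e\<in>span (w ` {..<k}). \<forall>t. (1 - (1/2) ^ (k + 2)) * norm e \<le> norm (e + t *\<^sub>R w k))"

lemma weakly_null_nearly_monotone_basic_subsequence:
  fixes z :: "nat \<Rightarrow> 'a::real_normed_vector"
  assumes z: "\<And>n. norm (z n) = 1" and weak: "weakly_tendsto z 0"
  shows "\<exists>\<phi>. strict_mono \<phi> \<and> nearly_monotone_basic (z \<circ> \<phi>)"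
proof -
  define Q where "Q n i j \<longleftrightarrow> i < j \<and>
    (\<forall>e\<in>span (z ` {..i}). \<forall>t. (1 - (1/2::real) ^ (n + 3)) * norm e \<le> norm (e + t *\<^sub>R z j))"
    for n i j
  have "\<exists>j. Q n i j" for n i
  proof -
    have "(0::real) < (1/2) ^ (n + 3)" by simp
    from weakly_null_eventually_almost_orthogonal[OF _ this z weak, of "z ` {..i}"]
    obtain N where
      "\<forall>m\<ge>N. \<forall>e\<in>span (z ` {..i}). \<forall>t. (1 - (1/2) ^ (n + 3)) * norm e \<le> norm (e + t *\<^sub>R z m)"
      by auto
    then have "Q n i (max N (Suc i))" unfolding Q_def by auto
    then show ?thesis ..
  qed
  then obtain \<phi> where \<phi>: "\<And>n. Q n (\<phi> n) (\<phi> (Suc n))"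
    using dependent_nat_choice[of "\<lambda>_ _. True" Q] by auto
  have mono: "strict_mono \<phi>" unfolding strict_mono_Suc_iff using \<phi> Q_def by blast
  have "nearly_monotone_basic (z \<circ> \<phi>)"
    unfolding nearly_monotone_basic_def
  proof (intro allI ballI)
    fix k e t assume e: "e \<in> span ((z \<circ> \<phi>) ` {..<k})"
    show "(1 - (1/2) ^ (k + 2)) * norm e \<le> norm (e + t *\<^sub>R (z \<circ> \<phi>) k)"
    proof (cases k)
      case 0
      then show ?thesis using e by simp
    next
      case (Suc n)
      have "(z \<circ> \<phi>) ` {..<k} \<subseteq> z ` {..\<phi> n}"
        using mono Suc by (auto simp: strict_mono_less_eq less_Suc_eq_le)
      with e have "e \<in> span (z ` {..\<phi> n})" using span_mono by blast
      moreover from \<phi>[of n] have "\<forall>e\<in>span (z ` {..\<phi> n}). \<forall>t.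
          (1 - (1/2) ^ (n + 3)) * norm e \<le> norm (e + t *\<^sub>R z (\<phi> (Suc n)))"
        unfolding Q_def by blast
      ultimately show ?thesis using Suc by (simp add: numeral_eq_Suc)
    qed
  qed
  with mono show ?thesis by blast
qed

lemma nearly_monotone_basic_block_bound:
  assumes w: "nearly_monotone_basic w" and e: "e \<in> span (w ` {..<k})"
  shows "u \<in> span (w ` {k..<k + d}) \<Longrightarrow> (1/2 + (1/2) ^ (k + d + 1)) * norm e \<le> norm (e + u)"
proof (induction d arbitrary: u)
  case 0
  then have "u = 0" by simp
  moreover have "(1/2::real) ^ (k + 1) \<le> 1/2"
    using power_decreasing[of 1 "k + 1" "1/2::real"] by simp
  ultimately show ?case by (simp add: mult_left_le_one_le)
next
  case (Suc d)
  define m where "m = k + d"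
  define a :: real where "a = (1/2) ^ (m + 2)"
  have "{k..<k + Suc d} = insert m {k..<k + d}" unfolding m_def by auto
  then have "w ` {k..<k + Suc d} = insert (w m) (w ` {k..<k + d})" by simp
  with Suc.prems obtain s where s: "u - s *\<^sub>R w m \<in> span (w ` {k..<k + d})"
    using span_breakdown_eq by metis
  define u' where "u' = u - s *\<^sub>R w m"
  have ih: "(1/2 + 2 * a) * norm e \<le> norm (e + u')"
    using Suc.IH[OF s] unfolding a_def m_def u'_def by simp
  have "w ` {..<k} \<union> w ` {k..<k + d} \<subseteq> w ` {..<m}" unfolding m_def by auto
  then have "e + u' \<in> span (w ` {..<m})"
    using e s span_mono[of _ "w ` {..<m}"] unfolding u'_def by (blast intro: span_add)
  then have "(1 - a) * norm (e + u') \<le> norm (e + u' + s *\<^sub>R w m)"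
    using w unfolding nearly_monotone_basic_def a_def by blast
  also have "e + u' + s *\<^sub>R w m = e + u" unfolding u'_def by simp
  finally have step: "(1 - a) * norm (e + u') \<le> norm (e + u)" .
  have "(1/2::real) ^ m \<le> 1" by (rule power_le_one) auto
  then have "a \<le> 1/4" unfolding a_def by (simp add: power_add)
  moreover have "0 \<le> a" unfolding a_def by simp
  ultimately have "0 \<le> a * (1/2 - 2 * a)" by simp
  moreover have "(1 - a) * (1/2 + 2 * a) = 1/2 + a + a * (1/2 - 2 * a)" by (simp add: field_simps)
  ultimately have "1/2 + a \<le> (1 - a) * (1/2 + 2 * a)" by simp
  then have "(1/2 + a) * norm e \<le> (1 - a) * ((1/2 + 2 * a) * norm e)"
    using mult_right_mono[OF _ norm_ge_zero[of e]] by (metis mult.assoc)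
  also have "\<dots> \<le> (1 - a) * norm (e + u')" using ih \<open>a \<le> 1/4\<close> by (intro mult_left_mono) auto
  also have "\<dots> \<le> norm (e + u)" by (rule step)
  finally show ?case unfolding a_def m_def by simp
qed

lemma nearly_monotone_basic_tail_bound:
  assumes w: "nearly_monotone_basic w" and e: "e \<in> span (w ` {..<k})" and u: "u \<in> span (w ` {k..})"
  shows "(1/2) * norm e \<le> norm (e + u)"
proof -
  from u have "\<exists>d. u \<in> span (w ` {k..<k + d})"
  proof (induction rule: span_induct_alt)
    case base
    then show ?case using span_zero by blast
  next
    case (step c x y)
    then obtain j d where j: "x = w j" "k \<le> j" and y: "y \<in> span (w ` {k..<k + d})" by auto
    define d' where "d' = max d (Suc j - k)"
    have "w ` {k..<k + d} \<subseteq> w ` {k..<k + d'}" "x \<in> w ` {k..<k + d'}"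
      using j unfolding d'_def by auto
    then have "c *\<^sub>R x + y \<in> span (w ` {k..<k + d'})"
      using y span_mono by (blast intro: span_add span_scale span_base)
    then show ?case ..
  qed
  then obtain d where "u \<in> span (w ` {k..<k + d})" ..
  from nearly_monotone_basic_block_bound[OF w e this]
  have "(1/2 + (1/2) ^ (k + d + 1)) * norm e \<le> norm (e + u)" .
  moreover have "(1/2) * norm e \<le> (1/2 + (1/2) ^ (k + d + 1)) * norm e"
    by (intro mult_right_mono) auto
  ultimately show ?thesis by linarith
qed

lemma nearly_monotone_basic_infdist_closed_span:
  assumes w: "nearly_monotone_basic w" "norm (w m) = 1" and m: "m \<notin> J"
  shows "1/6 \<le> infdist (w m) (closure (span (w ` J)))"
proof -
  have "1/6 \<le> dist (w m) y" if y: "y \<in> span (w ` J)" for y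
  proof -
    have "J \<subseteq> {..<m} \<union> {Suc m..}" using m by (auto simp: not_less_eq_eq nat_less_le)
    then have "y \<in> span (w ` {..<m} \<union> w ` {Suc m..})"
      using y span_mono by (metis image_Un image_mono subsetD)
    then obtain y1 y2 where y1: "y1 \<in> span (w ` {..<m})" and y2: "y2 \<in> span (w ` {Suc m..})"
      and y: "y = y1 + y2"
      unfolding span_Un by blast
    have "y1 \<in> span (w ` {..<Suc m})"
      using y1 span_mono[OF image_mono[of "{..<m}" "{..<Suc m}" w]] by auto
    moreover have "w m \<in> span (w ` {..<Suc m})" by (rule span_base) simp
    ultimately have "w m - y1 \<in> span (w ` {..<Suc m})" by (intro span_diff)
    from nearly_monotone_basic_tail_bound[OF w(1) this span_neg[OF y2]]
    have tail: "(1/2) * norm (w m - y1) \<le> dist (w m) y" unfolding y dist_norm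
      by (simp add: algebra_simps)
    have "(1/2::real) ^ m \<le> 1" by (rule power_le_one) auto
    then have "3/4 \<le> 1 - (1/2::real) ^ (m + 2)" by (simp add: power_add)
    from mult_right_mono[OF this norm_ge_zero[of "- y1"]]
    have "3/4 * norm y1 \<le> (1 - (1/2) ^ (m + 2)) * norm (- y1)" by simp
    also have "\<dots> \<le> norm (- y1 + 1 *\<^sub>R w m)"
      using w(1) span_neg[OF y1] unfolding nearly_monotone_basic_def by blast
    finally have "3/4 * norm y1 \<le> norm (w m - y1)" by simp
    moreover have "1 - norm y1 \<le> norm (w m - y1)"
      using norm_triangle_ineq2[of "w m" y1] w(2) by simp
    \<comment> \<open>hence \<open>norm (w m - y1) \<ge> 3/7\<close>, whatever \<open>norm y1\<close> is\<close>
    ultimately show ?thesis using tail by linarith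
  qed
  then have "1/6 \<le> infdist (w m) (span (w ` J))" by (intro infdist_geI) (auto intro: span_zero)
  then show ?thesis by (simp add: infdist_eq_setdist)
qed

lemma nearly_monotone_basic_even_span_infinite_codim:
  assumes w: "nearly_monotone_basic w" "\<And>n. norm (w n) = 1" "weakly_tendsto w 0"
  shows "\<not> finite_codim (closure (span (w ` {j. even j})))"
proof
  let ?V = "closure (span (w ` {j. even j}))"
  assume "finite_codim ?V"
  moreover have "strict_mono (\<lambda>i::nat. 2 * i + 1)" by (simp add: strict_mono_def)
  then have "weakly_tendsto (w \<circ> (\<lambda>i. 2 * i + 1)) 0" by (rule weakly_tendsto_subseq[OF w(3)])
  moreover have "subspace ?V" "closed ?V" by (simp_all add: subspace_closure)
  ultimately have "(\<lambda>i. infdist ((w \<circ> (\<lambda>i. 2 * i + 1)) i) ?V) \<longlonglongrightarrow> 0"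
    by (intro weakly_null_infdist_finite_codim)
  from order_tendstoD(2)[OF this, of "1/6"]
  obtain i where "infdist (w (2 * i + 1)) ?V < 1/6" unfolding eventually_sequentially by auto
  moreover have "1/6 \<le> infdist (w (2 * i + 1)) ?V"
    by (rule nearly_monotone_basic_infdist_closed_span[OF w(1,2)]) simp
  ultimately show False by linarith
qed

theorem lemma5p4:
  fixes x :: "nat \<Rightarrow> 'a::real_normed_vector" and l :: 'a
  assumes "almost_overcomplete x"
    and "weakly_tendsto x l"
  shows "x \<longlonglongrightarrow> l"
proof (rule ccontr)
  assume "\<not> x \<longlonglongrightarrow> l"
  then obtain \<rho> z c where \<rho>: "strict_mono \<rho>" and z: "\<And>n. norm (z n) = 1" "weakly_tendsto z 0"
    and x: "\<And>n. x (\<rho> n) = l + c n *\<^sub>R z n"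
    using not_tendsto_weakly_normalized_subsequence[OF assms(2)] by blast
  obtain \<phi> where \<phi>: "strict_mono \<phi>" and basic: "nearly_monotone_basic (z \<circ> \<phi>)"
    using weakly_null_nearly_monotone_basic_subsequence[OF z] by blast
  define V where "V = closure (span ((z \<circ> \<phi>) ` {j. even j}))"
  have V: "subspace V" "closed V" unfolding V_def by (simp_all add: subspace_closure)
  have "strict_mono (\<rho> \<circ> \<phi> \<circ> (\<lambda>k. 2 * k))" by (intro strict_mono_o \<rho> \<phi>) (simp add: strict_mono_def)
  moreover have "x ((\<rho> \<circ> \<phi> \<circ> (\<lambda>k. 2 * k)) k) - l \<in> V" for k
  proof -
    have "c (\<phi> (2 * k)) *\<^sub>R (z \<circ> \<phi>) (2 * k) \<in> span ((z \<circ> \<phi>) ` {j. even j})"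
      by (intro span_scale span_base) auto
    then have "c (\<phi> (2 * k)) *\<^sub>R (z \<circ> \<phi>) (2 * k) \<in> V" unfolding V_def using closure_subset by blast
    then show ?thesis using x by simp
  qed
  ultimately have "finite_codim V" by (rule almost_overcomplete_finite_codim[OF assms(1) _ V])
  moreover have "weakly_tendsto (z \<circ> \<phi>) 0" using weakly_tendsto_subseq[OF z(2) \<phi>] .
  then have "\<not> finite_codim V"
    unfolding V_def
      by (rule nearly_monotone_basic_even_span_infinite_codim[OF basic, rotated]) (simp add: z(1))
  ultimately show False by contradiction
qed

end
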